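(* Let $\Gamma$ be a weighted digraph with vertex set $\{1,\dots,n\}$, $n>1$, without loops and with strictly positive arc weights, with Laplacian matrix $L$. Let $\lambda_i\neq0$ be an eigenvalue of $L$. Then every nonzero column of $Q(-\lambda_i^{-1})$ is an eigenvector of $L$ corresponding to $\lambda_i$.
   Context: $W=(w_{ij})$ is the matrix of arc weights ($w_{ij}>0$ iff there is an arc $i\to j$, else $0$). The Laplacian $L=(\ell_{ij})$: $\ell_{ij}=-w_{ij}$ for $j\ne i$, $\ell_{ii}=\sum_{k\ne i}w_{ik}$. The weight of a subgraph is the product of its arc weights (1 if no arcs); the weight of a set of subgraphs is the sum of their weights (0 for the empty set). A converging tree is a weakly connected digraph with one vertex (the root) of outdegree 0 and all others of outdegree 1; an in-forest is a spanning subgraph of $\Gamma$ whose weak components are converging trees. $Q_k=(q^k_{ij})$ where $q^k_{ij}$ is the total weight of in-forests with $k$ arcs in which $i$ lies in a tree rooted at $j$, and for $\tau\in\mathbb C$, $Q(\tau)=\sum_{k\ge0}Q_k\tau^k$ (a finite sum). *)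

theory Defs
  imports Complex_Main "Jordan_Normal_Form.Char_Poly"
begin

(* Vertices are 0..<n (the paper's 1..n shifted by one).
   w :: nat => nat => real is the weight matrix; there is an arc i -> j iff w i j > 0. *)

definition arcs :: "nat \<Rightarrow> (nat \<Rightarrow> nat \<Rightarrow> real) \<Rightarrow> (nat \<times> nat) set" where
  "arcs n w = {(i,j). i < n \<and> j < n \<and> w i j > 0}"

definition laplacian :: "nat \<Rightarrow> (nat \<Rightarrow> nat \<Rightarrow> real) \<Rightarrow> complex mat" where
  "laplacian n w = mat n n (\<lambda>(i,j). if i = j then complex_of_real (\<Sum>k\<in>{0..<n}-{i}. w i k)
                                     else - complex_of_real (w i j))"

definition sg_weight :: "(nat \<Rightarrow> nat \<Rightarrow> real) \<Rightarrow> (nat \<times> nat) set \<Rightarrow> real" where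
  "sg_weight w F = (\<Prod>(i,j)\<in>F. w i j)"

definition outdeg :: "(nat \<times> nat) set \<Rightarrow> nat \<Rightarrow> nat" where
  "outdeg F v = card {u. (v,u) \<in> F}"

definition weakly_conn :: "nat \<Rightarrow> (nat \<times> nat) set \<Rightarrow> nat \<Rightarrow> nat \<Rightarrow> bool" where
  "weakly_conn n F u v \<longleftrightarrow> u < n \<and> v < n \<and> (u, v) \<in> (F \<union> F\<inverse>)\<^sup>*"

definition weak_comp :: "nat \<Rightarrow> (nat \<times> nat) set \<Rightarrow> nat \<Rightarrow> nat set" where
  "weak_comp n F v = {u. weakly_conn n F v u}"

(* A weak component C (with the arcs of F inside it) is a converging tree:
   it is weakly connected by construction; exactly one vertex (the root) has outdegree 0,
   all the others have outdegree 1. *)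
definition converging_tree_comp :: "(nat \<times> nat) set \<Rightarrow> nat set \<Rightarrow> bool" where
  "converging_tree_comp F C \<longleftrightarrow>
     (\<exists>!r. r \<in> C \<and> outdeg F r = 0) \<and> (\<forall>v\<in>C. outdeg F v = 0 \<or> outdeg F v = 1)"

definition in_forest :: "nat \<Rightarrow> (nat \<Rightarrow> nat \<Rightarrow> real) \<Rightarrow> (nat \<times> nat) set \<Rightarrow> bool" where
  "in_forest n w F \<longleftrightarrow> F \<subseteq> arcs n w \<and>
     (\<forall>v<n. converging_tree_comp F (weak_comp n F v))"

definition in_tree_rooted_at :: "nat \<Rightarrow> (nat \<times> nat) set \<Rightarrow> nat \<Rightarrow> nat \<Rightarrow> bool" where
  "in_tree_rooted_at n F i j \<longleftrightarrow> weakly_conn n F i j \<and> outdeg F j = 0"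

definition qk :: "nat \<Rightarrow> (nat \<Rightarrow> nat \<Rightarrow> real) \<Rightarrow> nat \<Rightarrow> nat \<Rightarrow> nat \<Rightarrow> real" where
  "qk n w k i j = (\<Sum>F\<in>{F. in_forest n w F \<and> card F = k \<and> in_tree_rooted_at n F i j}. sg_weight w F)"

definition Qk_mat :: "nat \<Rightarrow> (nat \<Rightarrow> nat \<Rightarrow> real) \<Rightarrow> nat \<Rightarrow> complex mat" where
  "Qk_mat n w k = mat n n (\<lambda>(i,j). complex_of_real (qk n w k i j))"

(* Q(tau) = sum_k Q_k tau^k; every in-forest has at most n-1 arcs, so k \<le> n suffices *)
definition Q_tau :: "nat \<Rightarrow> (nat \<Rightarrow> nat \<Rightarrow> real) \<Rightarrow> complex \<Rightarrow> complex mat" where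
  "Q_tau n w \<tau> = mat n n (\<lambda>(i,j). \<Sum>k\<le>n. complex_of_real (qk n w k i j) * \<tau> ^ k)"

end

theory Submission
  imports Defs
begin

(* In-forests are the arc sets in which every vertex has at most one outgoing arc and reaches a
   vertex without one, its root.  Write q^k_ij for the weight of in-forests with k arcs in which i
   has root j, and sigma_k for the total weight of in-forests with k arcs.  Expanding
   (L Q_k)_ij = sum_(m <> i) w_im (q^k_ij - q^k_mj) as a sum over pairs (F, i -> m), the pairs in
   which i already has an arc i -> m' cancel under re-hanging i from m' to m, and the pairs in
   which i is a root correspond to the in-forests with k + 1 arcs in which i is not a root.  This
   gives Q_(k+1) = sigma_(k+1) I - L Q_k; summing, (I + tau L) Q(tau) = s(tau) I with
   s(tau) = sum_k sigma_k tau^k.  For tau = -1/lambda the matrix I + tau L is singular, so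
   s(tau) = 0 and (L - lambda I) Q(tau) = 0. *)

section \<open>Functional forests\<close>

definition functional_forest :: "('a \<times> 'a) set \<Rightarrow> bool" where
  "functional_forest F \<longleftrightarrow> single_valued F \<and> (\<forall>v. \<exists>r. (v, r) \<in> F\<^sup>* \<and> r \<notin> Domain F)"

definition tree_root :: "('a \<times> 'a) set \<Rightarrow> 'a \<Rightarrow> 'a" where
  "tree_root F v = (THE r. (v, r) \<in> F\<^sup>* \<and> r \<notin> Domain F)"

definition parent :: "('a \<times> 'a) set \<Rightarrow> 'a \<Rightarrow> 'a" where
  "parent F v = (THE u. (v, u) \<in> F)"

lemma functional_forest_single_valued: "functional_forest F \<Longrightarrow> single_valued F"
  unfolding functional_forest_def by simp

lemma single_valued_rtrancl_next:
  assumes "single_valued F" "(a, b) \<in> F\<^sup>*" "a \<noteq> b" "(a, c) \<in> F"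
  shows "(c, b) \<in> F\<^sup>*"
  using assms(2,3)
proof (cases rule: converse_rtranclE)
  case (step y)
  with assms(1,4) have "y = c" unfolding single_valued_def by blast
  with step show ?thesis by simp
qed simp

lemma single_valued_rtrancl_comparable:
  assumes "single_valued F" "(v, a) \<in> F\<^sup>*" "(v, b) \<in> F\<^sup>*"
  shows "(a, b) \<in> F\<^sup>* \<or> (b, a) \<in> F\<^sup>*"
  using assms(2)
proof (induction rule: rtrancl_induct)
  case base
  then show ?case using assms(3) by simp
next
  case (step y z)
  show ?case
  proof (cases "(y, b) \<in> F\<^sup>* \<and> y \<noteq> b")
    case True
    then show ?thesis using single_valued_rtrancl_next[OF assms(1) _ _ step(2)] by blast
  next
    case False
    with step.IH have "(b, y) \<in> F\<^sup>*" by auto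
    with step(2) show ?thesis by (meson rtrancl_into_rtrancl)
  qed
qed

lemma tree_root_eqI:
  assumes "single_valued F" "(v, r) \<in> F\<^sup>*" "r \<notin> Domain F"
  shows "tree_root F v = r"
  unfolding tree_root_def
proof (rule the_equality)
  fix s assume "(v, s) \<in> F\<^sup>* \<and> s \<notin> Domain F"
  with assms show "s = r"
    using single_valued_rtrancl_comparable[OF assms(1,2)] Not_Domain_rtrancl by metis
qed (use assms in simp)

lemma
  assumes "functional_forest F"
  shows rtrancl_tree_root: "(v, tree_root F v) \<in> F\<^sup>*" and tree_root_not_Domain: "tree_root F v \<notin> Domain F"
proof -
  from assms obtain r where "(v, r) \<in> F\<^sup>*" "r \<notin> Domain F"
    unfolding functional_forest_def by blast
  moreover note functional_forest_single_valued[OF assms]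
  ultimately show "(v, tree_root F v) \<in> F\<^sup>*" "tree_root F v \<notin> Domain F" using tree_root_eqI by metis+
qed

lemma tree_root_sink: "single_valued F \<Longrightarrow> v \<notin> Domain F \<Longrightarrow> tree_root F v = v"
  by (rule tree_root_eqI) auto

lemma tree_root_weakly_connected:
  assumes "functional_forest F" "(a, b) \<in> (F \<union> F\<inverse>)\<^sup>*"
  shows "tree_root F a = tree_root F b"
  using assms(2)
proof (induction rule: rtrancl_induct)
  case (step y z)
  have "tree_root F u = tree_root F v" if "(u, v) \<in> F" for u v
  proof (rule tree_root_eqI[OF functional_forest_single_valued[OF assms(1)]])
    show "(u, tree_root F v) \<in> F\<^sup>*"
      using that rtrancl_tree_root[OF assms(1)] by (rule converse_rtrancl_into_rtrancl)
  qed (rule tree_root_not_Domain[OF assms(1)])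
  with step show ?case by auto
qed simp

lemma functional_forest_insert:
  assumes F: "functional_forest F" and i: "i \<notin> Domain F" and m: "tree_root F m \<noteq> i"
  shows "functional_forest (insert (i, m) F)"
    and "tree_root F u \<noteq> i \<Longrightarrow> tree_root (insert (i, m) F) u = tree_root F u"
    and "tree_root F u = i \<Longrightarrow> tree_root (insert (i, m) F) u = tree_root F m"
proof -
  let ?G = "insert (i, m) F"
  have sv: "single_valued ?G"
    using functional_forest_single_valued[OF F] i unfolding single_valued_def by auto
  have sink: "x \<notin> Domain ?G \<longleftrightarrow> x \<notin> Domain F \<and> x \<noteq> i" for x by auto
  have mono: "F\<^sup>* \<subseteq> ?G\<^sup>*" by (rule rtrancl_mono) auto
  have kept: "(u, tree_root F u) \<in> ?G\<^sup>* \<and> tree_root F u \<notin> Domain ?G" if "tree_root F u \<noteq> i" for u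
    using rtrancl_tree_root[OF F, of u] tree_root_not_Domain[OF F, of u] mono that sink by auto
  have moved: "(u, tree_root F m) \<in> ?G\<^sup>* \<and> tree_root F m \<notin> Domain ?G" if "tree_root F u = i" for u
  proof -
    have "(u, i) \<in> ?G\<^sup>*" using rtrancl_tree_root[OF F, of u] mono that by auto
    then have "(u, m) \<in> ?G\<^sup>*" by (simp add: rtrancl_into_rtrancl)
    with kept[OF m] show ?thesis by (meson rtrancl_trans)
  qed
  show "functional_forest ?G"
    unfolding functional_forest_def using sv kept moved by blast
  show "tree_root F u \<noteq> i \<Longrightarrow> tree_root ?G u = tree_root F u"
    using kept tree_root_eqI[OF sv] by blast
  show "tree_root F u = i \<Longrightarrow> tree_root ?G u = tree_root F m"
    using moved tree_root_eqI[OF sv] by blast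
qed

lemma rtrancl_Diff_arc:
  assumes "(v, r) \<in> G\<^sup>*"
  shows "(v, r) \<in> (G - {(i, m)})\<^sup>* \<or> (v, i) \<in> (G - {(i, m)})\<^sup>*"
  using assms
proof (induction rule: rtrancl_induct)
  case (step y z)
  then show ?case by (cases "(y, z) = (i, m)") (auto intro: rtrancl_into_rtrancl)
qed simp

lemma single_valued_cycle_closed:
  assumes sv: "single_valued G" and im: "(i, m) \<in> G" and mi: "(m, i) \<in> G\<^sup>*"
    and iu: "(i, u) \<in> G\<^sup>*"
  shows "(u, i) \<in> G\<^sup>*"
  using iu
proof (induction rule: rtrancl_induct)
  case (step y z)
  show ?case
  proof (cases "y = i")
    case True
    with step(2) im sv have "z = m" unfolding single_valued_def by blast
    with mi show ?thesis by simp
  next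
    case False
    with single_valued_rtrancl_next[OF sv step(3) _ step(2)] show ?thesis by simp
  qed
qed simp

lemma functional_forest_Diff_arc:
  assumes G: "functional_forest G" and im: "(i, m) \<in> G"
  shows "functional_forest (G - {(i, m)})" and "i \<notin> Domain (G - {(i, m)})"
    and "tree_root (G - {(i, m)}) m \<noteq> i"
proof -
  let ?F = "G - {(i, m)}"
  note sv = functional_forest_single_valued[OF G]
  show i: "i \<notin> Domain ?F" using sv im unfolding single_valued_def by auto
  have "\<exists>r. (v, r) \<in> ?F\<^sup>* \<and> r \<notin> Domain ?F" for v
    using rtrancl_Diff_arc[OF rtrancl_tree_root[OF G, of v], of i m] tree_root_not_Domain[OF G, of v] i
    by blast
  then show F: "functional_forest ?F"
    using sv single_valued_subset[of ?F G] unfolding functional_forest_def by blast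
  show "tree_root ?F m \<noteq> i"
  proof
    assume "tree_root ?F m = i"
    then have "(m, i) \<in> G\<^sup>*"
      using rtrancl_tree_root[OF F, of m] rtrancl_mono[of ?F G] by auto
    then have "(tree_root G i, i) \<in> G\<^sup>*"
      using single_valued_cycle_closed[OF sv im _ rtrancl_tree_root[OF G]] by blast
    then have "tree_root G i = i" using tree_root_not_Domain[OF G] Not_Domain_rtrancl by metis
    then show False using tree_root_not_Domain[OF G, of i] im by auto
  qed
qed

lemma functional_forest_rehang:
  assumes F: "functional_forest F" and im': "(i, m') \<in> F" and roots: "tree_root F m \<noteq> tree_root F i"
  defines "G \<equiv> insert (i, m) (F - {(i, m')})"
  shows "functional_forest G" and "tree_root G i = tree_root F m" and "tree_root G m' = tree_root F i"
proof -
  let ?F0 = "F - {(i, m')}"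
  note F0 = functional_forest_Diff_arc[OF F im']
  have F_eq: "insert (i, m') ?F0 = F" using im' by auto
  have root_F0_i: "tree_root ?F0 i = i"
    using tree_root_sink[OF functional_forest_single_valued[OF F0(1)] F0(2)] .
  have root_F_i: "tree_root F i = tree_root ?F0 m'"
    using functional_forest_insert(3)[OF F0, of i] root_F0_i F_eq by simp
  have root_F0_m: "tree_root ?F0 m \<noteq> i"
    using functional_forest_insert(3)[OF F0, of m] roots root_F_i F_eq by auto
  have root_F_m: "tree_root F m = tree_root ?F0 m"
    using functional_forest_insert(2)[OF F0 root_F0_m] F_eq by simp
  show "functional_forest G"
    using functional_forest_insert(1)[OF F0(1,2) root_F0_m] unfolding G_def .
  show "tree_root G i = tree_root F m"
    using functional_forest_insert(3)[OF F0(1,2) root_F0_m root_F0_i] root_F_m unfolding G_def by simp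
  show "tree_root G m' = tree_root F i"
    using functional_forest_insert(2)[OF F0(1,2) root_F0_m F0(3)] root_F_i unfolding G_def by simp
qed

lemma functional_forest_irrefl:
  assumes "functional_forest F"
  shows "(i, i) \<notin> F"
proof
  assume "(i, i) \<in> F"
  from functional_forest_Diff_arc[OF assms this] show False
    using tree_root_sink functional_forest_single_valued by metis
qed

lemma single_valued_weakly_connected_sink:
  assumes sv: "single_valued F" and "(v, r) \<in> (F \<union> F\<inverse>)\<^sup>*" and r: "r \<notin> Domain F"
  shows "(v, r) \<in> F\<^sup>*"
  using assms(2)
proof (induction rule: converse_rtrancl_induct)
  case (step y z)
  show ?case
  proof (cases "(y, z) \<in> F")
    case True
    with step.IH show ?thesis by (meson converse_rtrancl_into_rtrancl)
  next
    case False
    with step(1) have "(z, y) \<in> F" by auto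
    moreover from this r have "z \<noteq> r" by auto
    ultimately show ?thesis using single_valued_rtrancl_next[OF sv step.IH] by blast
  qed
qed simp

lemma parent_eq: "single_valued F \<Longrightarrow> (v, u) \<in> F \<Longrightarrow> parent F v = u"
  unfolding parent_def single_valued_def by blast

lemma parent_in: "single_valued F \<Longrightarrow> v \<in> Domain F \<Longrightarrow> (v, parent F v) \<in> F"
  using parent_eq by fastforce

section \<open>In-forests as functional forests\<close>

lemma finite_arcs: "finite (arcs n w)"
  by (rule finite_subset[of _ "{0..<n} \<times> {0..<n}"]) (auto simp: arcs_def)

lemma finite_if_subset_arcs: "F \<subseteq> arcs n w \<Longrightarrow> finite F"
  using finite_arcs finite_subset by blast

lemma rtrancl_arcs_less:
  assumes "F \<subseteq> arcs n w" "(v, r) \<in> F\<^sup>*" "v < n"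
  shows "r < n"
  using assms(2,3) by induction (use assms(1) in \<open>auto simp: arcs_def\<close>)

lemma outdeg_eq_0_iff: "finite F \<Longrightarrow> outdeg F v = 0 \<longleftrightarrow> v \<notin> Domain F"
  unfolding outdeg_def using finite_subset[of "{u. (v, u) \<in> F}" "snd ` F"] by force

lemma outdeg_le_1: "single_valued F \<Longrightarrow> outdeg F v \<le> 1"
  unfolding outdeg_def single_valued_def
  by (cases "finite {u. (v, u) \<in> F}") (auto simp: card_le_Suc0_iff_eq)

lemma mem_weak_comp_iff: "u \<in> weak_comp n F v \<longleftrightarrow> v < n \<and> u < n \<and> (v, u) \<in> (F \<union> F\<inverse>)\<^sup>*"
  unfolding weak_comp_def weakly_conn_def by simp

lemma in_forest_imp_functional_forest:
  assumes "in_forest n w F"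
  shows "functional_forest F"
proof -
  have sub: "F \<subseteq> arcs n w" and comp: "\<And>v. v < n \<Longrightarrow> converging_tree_comp F (weak_comp n F v)"
    using assms unfolding in_forest_def by auto
  have fin: "finite F" using finite_if_subset_arcs[OF sub] .
  have sv: "single_valued F"
  proof (rule single_valuedI)
    fix a b c assume ab: "(a, b) \<in> F" and ac: "(a, c) \<in> F"
    with sub have "a < n" by (auto simp: arcs_def)
    then have "a \<in> weak_comp n F a" by (simp add: mem_weak_comp_iff)
    with \<open>a < n\<close> have "outdeg F a = 0 \<or> outdeg F a = 1"
      using comp unfolding converging_tree_comp_def by blast
    moreover have "outdeg F a \<noteq> 0" using ab outdeg_eq_0_iff[OF fin] by blast
    ultimately have "card {u. (a, u) \<in> F} = 1" unfolding outdeg_def by simp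
    with ab ac show "b = c" by (metis card_1_singletonE mem_Collect_eq singletonD)
  qed
  have "\<exists>r. (v, r) \<in> F\<^sup>* \<and> r \<notin> Domain F" for v
  proof (cases "v < n")
    case True
    then obtain r where "r \<in> weak_comp n F v" "outdeg F r = 0"
      using comp[OF True] unfolding converging_tree_comp_def by auto
    then have "(v, r) \<in> (F \<union> F\<inverse>)\<^sup>*" "r \<notin> Domain F"
      using outdeg_eq_0_iff[OF fin] by (auto simp: mem_weak_comp_iff)
    then show ?thesis using single_valued_weakly_connected_sink[OF sv] by blast
  next
    case False
    with sub have "v \<notin> Domain F" by (auto simp: arcs_def)
    then show ?thesis by blast
  qed
  with sv show ?thesis unfolding functional_forest_def by blast
qed

lemma functional_forest_imp_in_forest:
  assumes sub: "F \<subseteq> arcs n w" and F: "functional_forest F"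
  shows "in_forest n w F"
proof -
  have fin: "finite F" using finite_if_subset_arcs[OF sub] .
  note sv = functional_forest_single_valued[OF F]
  have unique_root: "\<exists>!r. r \<in> weak_comp n F v \<and> outdeg F r = 0" if v: "v < n" for v
  proof
    have "(v, tree_root F v) \<in> (F \<union> F\<inverse>)\<^sup>*"
      using rtrancl_tree_root[OF F, of v] rtrancl_mono[of F "F \<union> F\<inverse>"] by blast
    moreover have "tree_root F v < n" using rtrancl_arcs_less[OF sub rtrancl_tree_root[OF F] v] .
    ultimately show "tree_root F v \<in> weak_comp n F v \<and> outdeg F (tree_root F v) = 0"
      using v tree_root_not_Domain[OF F] outdeg_eq_0_iff[OF fin] by (simp add: mem_weak_comp_iff)
  next
    fix r assume "r \<in> weak_comp n F v \<and> outdeg F r = 0"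
    then have "(v, r) \<in> (F \<union> F\<inverse>)\<^sup>*" "r \<notin> Domain F"
      using outdeg_eq_0_iff[OF fin] by (auto simp: mem_weak_comp_iff)
    then show "r = tree_root F v"
      using tree_root_weakly_connected[OF F] tree_root_sink[OF sv] by metis
  qed
  have "outdeg F u = 0 \<or> outdeg F u = 1" for u
    using outdeg_le_1[OF sv, of u] by linarith
  with sub unique_root show ?thesis
    unfolding in_forest_def converging_tree_comp_def by blast
qed

lemma in_forest_iff: "in_forest n w F \<longleftrightarrow> F \<subseteq> arcs n w \<and> functional_forest F"
proof
  assume F: "in_forest n w F"
  then have "F \<subseteq> arcs n w" unfolding in_forest_def by (rule conjunct1)
  with in_forest_imp_functional_forest[OF F] show "F \<subseteq> arcs n w \<and> functional_forest F" by simp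
qed (use functional_forest_imp_in_forest in blast)

lemma in_tree_rooted_at_iff:
  assumes sub: "F \<subseteq> arcs n w" and F: "functional_forest F"
  shows "in_tree_rooted_at n F i j \<longleftrightarrow> i < n \<and> tree_root F i = j"
proof -
  have fin: "finite F" using finite_if_subset_arcs[OF sub] .
  note sv = functional_forest_single_valued[OF F]
  show ?thesis
  proof
    assume "in_tree_rooted_at n F i j"
    then have "i < n" "(i, j) \<in> (F \<union> F\<inverse>)\<^sup>*" "j \<notin> Domain F"
      using outdeg_eq_0_iff[OF fin] unfolding in_tree_rooted_at_def weakly_conn_def by auto
    then show "i < n \<and> tree_root F i = j"
      using tree_root_weakly_connected[OF F] tree_root_sink[OF sv] by metis
  next
    assume i: "i < n \<and> tree_root F i = j"
    then have "(i, j) \<in> F\<^sup>*" "j \<notin> Domain F"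
      using rtrancl_tree_root[OF F, of i] tree_root_not_Domain[OF F, of i] by auto
    moreover from this have "j < n" using rtrancl_arcs_less[OF sub] i by blast
    ultimately show "in_tree_rooted_at n F i j"
      using i rtrancl_mono[of F "F \<union> F\<inverse>"] outdeg_eq_0_iff[OF fin]
      unfolding in_tree_rooted_at_def weakly_conn_def by auto
  qed
qed

definition forests :: "nat \<Rightarrow> (nat \<Rightarrow> nat \<Rightarrow> real) \<Rightarrow> nat \<Rightarrow> (nat \<times> nat) set set" where
  "forests n w k = {F. F \<subseteq> arcs n w \<and> functional_forest F \<and> card F = k}"

definition forest_weight :: "nat \<Rightarrow> (nat \<Rightarrow> nat \<Rightarrow> real) \<Rightarrow> nat \<Rightarrow> real" where
  "forest_weight n w k = (\<Sum>F\<in>forests n w k. sg_weight w F)"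

lemma finite_forests: "finite (forests n w k)"
  by (rule finite_subset[of _ "Pow (arcs n w)"]) (auto simp: forests_def finite_arcs)

lemma qk_eq_sum_forests:
  assumes "i < n"
  shows "qk n w k i j = (\<Sum>F\<in>forests n w k. sg_weight w F * of_bool (tree_root F i = j))"
proof -
  have "{F. in_forest n w F \<and> card F = k \<and> in_tree_rooted_at n F i j}
      = forests n w k \<inter> {F. tree_root F i = j}"
    using in_tree_rooted_at_iff assms by (auto simp: forests_def in_forest_iff)
  then show ?thesis unfolding qk_def by (simp add: finite_forests)
qed

section \<open>The recurrence for the forest matrices\<close>

lemma sg_weight_insert:
  "finite F \<Longrightarrow> (a, b) \<notin> F \<Longrightarrow> sg_weight w (insert (a, b) F) = w a b * sg_weight w F"
  unfolding sg_weight_def by simp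

(* The summand of (L Q_k)_ij = sum_(m <> i) w_im (q^k_ij - q^k_mj) belonging to the in-forest F
   and the vertex m. *)
definition laplacian_forest_term ::
    "(nat \<Rightarrow> nat \<Rightarrow> real) \<Rightarrow> nat \<Rightarrow> nat \<Rightarrow> (nat \<times> nat) set \<Rightarrow> nat \<Rightarrow> real" where
  "laplacian_forest_term w i j F m =
     w i m * sg_weight w F * (of_bool (tree_root F i = j) - of_bool (tree_root F m = j))"

(* The pairs (F, m) whose summand can be nonzero: either i is a root of F and adding the arc
   i -> m keeps a forest, or i has an arc to its parent and moving it to m changes the root of i. *)
definition attach_pairs :: "nat \<Rightarrow> (nat \<Rightarrow> nat \<Rightarrow> real) \<Rightarrow> nat \<Rightarrow> nat \<Rightarrow> ((nat \<times> nat) set \<times> nat) set" where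
  "attach_pairs n w k i = {(F, m) \<in> forests n w k \<times> ({0..<n} - {i}).
     w i m > 0 \<and> i \<notin> Domain F \<and> tree_root F m \<noteq> i}"

definition rehang_pairs :: "nat \<Rightarrow> (nat \<Rightarrow> nat \<Rightarrow> real) \<Rightarrow> nat \<Rightarrow> nat \<Rightarrow> ((nat \<times> nat) set \<times> nat) set" where
  "rehang_pairs n w k i = {(F, m) \<in> forests n w k \<times> ({0..<n} - {i}).
     w i m > 0 \<and> i \<in> Domain F \<and> tree_root F m \<noteq> tree_root F i}"

lemma laplacian_qk_eq_sum_forest_terms:
  assumes "i < n"
  shows "(\<Sum>m\<in>{0..<n} - {i}. w i m * (qk n w k i j - qk n w k m j))
       = (\<Sum>(F, m)\<in>forests n w k \<times> ({0..<n} - {i}). laplacian_forest_term w i j F m)"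
proof -
  have "qk n w k i j - qk n w k m j
      = (\<Sum>F\<in>forests n w k. sg_weight w F * (of_bool (tree_root F i = j) - of_bool (tree_root F m = j)))"
    if "m < n" for m
    using assms that
    by (simp only: qk_eq_sum_forests sum_subtractf[symmetric] right_diff_distrib)
  then show ?thesis
    unfolding sum.cartesian_product[symmetric] laplacian_forest_term_def
    by (subst sum.swap) (simp add: sum_distrib_left mult.assoc)
qed

lemma sum_forest_terms_split:
  assumes nonneg: "\<And>m. m < n \<Longrightarrow> w i m \<ge> 0"
  shows "(\<Sum>(F, m)\<in>forests n w k \<times> ({0..<n} - {i}). laplacian_forest_term w i j F m)
       = (\<Sum>(F, m)\<in>attach_pairs n w k i. laplacian_forest_term w i j F m)
       + (\<Sum>(F, m)\<in>rehang_pairs n w k i. laplacian_forest_term w i j F m)"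
proof -
  let ?P = "forests n w k \<times> ({0..<n} - {i})"
  let ?t = "\<lambda>(F, m). laplacian_forest_term w i j F m"
  have fin: "finite ?P" using finite_forests by simp
  have sub: "attach_pairs n w k i \<subseteq> ?P" "rehang_pairs n w k i \<subseteq> ?P"
    unfolding attach_pairs_def rehang_pairs_def by auto
  have "?t x = 0" if x: "x \<in> ?P - (attach_pairs n w k i \<union> rehang_pairs n w k i)" for x
  proof -
    obtain F m where xFm: "x = (F, m)" by fastforce
    with x have F: "F \<in> forests n w k" and m: "m < n" by auto
    with nonneg have "w i m = 0 \<or> w i m > 0" by fastforce
    moreover have "tree_root F i = i" if "i \<notin> Domain F"
      using F that by (simp add: forests_def tree_root_sink functional_forest_single_valued)
    ultimately have "w i m = 0 \<or> tree_root F m = tree_root F i"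
      using x unfolding xFm attach_pairs_def rehang_pairs_def by auto
    then show ?thesis unfolding xFm laplacian_forest_term_def by auto
  qed
  then have "sum ?t ?P = sum ?t (attach_pairs n w k i \<union> rehang_pairs n w k i)"
    using sub by (intro sum.mono_neutral_right[OF fin]) auto
  also have "\<dots> = sum ?t (attach_pairs n w k i) + sum ?t (rehang_pairs n w k i)"
    using finite_subset[OF sub(1) fin] finite_subset[OF sub(2) fin]
    by (intro sum.union_disjoint) (auto simp: attach_pairs_def rehang_pairs_def)
  finally show ?thesis .
qed

lemma rehang_pairs_swap:
  assumes x: "(F, m) \<in> rehang_pairs n w k i"
  defines "G \<equiv> insert (i, m) (F - {(i, parent F i)})"
  shows "(G, parent F i) \<in> rehang_pairs n w k i" and "parent G i = m"
    and "insert (i, parent F i) (G - {(i, m)}) = F"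
    and "laplacian_forest_term w i j G (parent F i) = - laplacian_forest_term w i j F m"
proof -
  from x have sub: "F \<subseteq> arcs n w" and F: "functional_forest F" and card: "card F = k"
    and m: "m < n" "m \<noteq> i" "w i m > 0" and i: "i \<in> Domain F"
    and roots: "tree_root F m \<noteq> tree_root F i"
    unfolding rehang_pairs_def forests_def by auto
  define m' where "m' = parent F i"
  define F0 where "F0 = F - {(i, m')}"
  have im': "(i, m') \<in> F"
    unfolding m'_def using parent_in[OF functional_forest_single_valued[OF F] i] .
  then have m': "i < n" "m' < n" "m' \<noteq> i" "w i m' > 0"
    using sub functional_forest_irrefl[OF F] by (auto simp: arcs_def)
  note G = functional_forest_rehang[OF F im' roots, folded F0_def m'_def G_def]
  have fin: "finite F0" using finite_if_subset_arcs[OF sub] unfolding F0_def by simp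
  have notin: "(i, m) \<notin> F0" "(i, m') \<notin> F0"
    using functional_forest_Diff_arc(2)[OF F im'] unfolding F0_def by auto
  have F_eq: "F = insert (i, m') F0" using im' unfolding F0_def by auto
  have G_eq: "G = insert (i, m) F0" unfolding G_def F0_def m'_def ..
  have "card G = k" using card fin notin unfolding F_eq G_eq by simp
  moreover have "G \<subseteq> arcs n w" using sub m m'(1) unfolding G_eq F0_def by (auto simp: arcs_def)
  ultimately show "(G, m') \<in> rehang_pairs n w k i"
    using G m' roots unfolding rehang_pairs_def forests_def G_eq by auto
  show "parent G i = m"
    using parent_eq[OF functional_forest_single_valued[OF G(1)]] unfolding G_eq by simp
  show "insert (i, m') (G - {(i, m)}) = F"
    using notin unfolding F_eq G_eq by auto
  show "laplacian_forest_term w i j G m' = - laplacian_forest_term w i j F m"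
    using G notin fin unfolding F_eq G_eq laplacian_forest_term_def
    by (simp add: sg_weight_insert algebra_simps)
qed

lemma sum_rehang_pairs_eq_0:
  "(\<Sum>(F, m)\<in>rehang_pairs n w k i. laplacian_forest_term w i j F m) = 0"
proof -
  let ?R = "rehang_pairs n w k i"
  let ?t = "\<lambda>(F, m). laplacian_forest_term w i j F m"
  \<comment> \<open>re-hanging i from its parent to m is a sign-reversing involution\<close>
  define g where "g = (\<lambda>(F, m). (insert (i, m) (F - {(i, parent F i)}), parent F i))"
  have "g x \<in> ?R \<and> g (g x) = x \<and> ?t (g x) = - ?t x" if "x \<in> ?R" for x
  proof -
    obtain F m where x_eq: "x = (F, m)" by fastforce
    from rehang_pairs_swap[OF that[unfolded x_eq]] show ?thesis
      unfolding g_def x_eq by simp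
  qed
  then have "sum ?t ?R = sum (\<lambda>x. - ?t x) ?R"
    by (intro sum.reindex_bij_witness[of ?R g g]) auto
  then show ?thesis by (simp add: sum_negf)
qed

lemma attach_pairs_insert_arc:
  assumes x: "(F, m) \<in> attach_pairs n w k i" and i: "i < n"
  shows "insert (i, m) F \<in> forests n w (Suc k)" and "(i, m) \<notin> F"
    and "parent (insert (i, m) F) i = m"
    and "sg_weight w (insert (i, m) F) * (of_bool (i = j) - of_bool (tree_root (insert (i, m) F) i = j))
         = laplacian_forest_term w i j F m"
proof -
  from x have sub: "F \<subseteq> arcs n w" and F: "functional_forest F" and card: "card F = k"
    and m: "m < n" "w i m > 0" and sink: "i \<notin> Domain F" and root_m: "tree_root F m \<noteq> i"
    unfolding attach_pairs_def forests_def by auto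
  have fin: "finite F" using finite_if_subset_arcs[OF sub] .
  show notin: "(i, m) \<notin> F" using sink by auto
  have root_i: "tree_root F i = i"
    using tree_root_sink[OF functional_forest_single_valued[OF F] sink] .
  note G = functional_forest_insert[OF F sink root_m]
  show "insert (i, m) F \<in> forests n w (Suc k)"
    using G(1) sub card fin notin i m unfolding forests_def by (auto simp: arcs_def)
  show "parent (insert (i, m) F) i = m"
    using parent_eq[OF functional_forest_single_valued[OF G(1)]] by simp
  show "sg_weight w (insert (i, m) F) * (of_bool (i = j) - of_bool (tree_root (insert (i, m) F) i = j))
      = laplacian_forest_term w i j F m"
    using G(3)[OF root_i] root_i fin notin unfolding laplacian_forest_term_def
    by (simp add: sg_weight_insert)
qed

lemma forests_Diff_parent_arc:
  assumes G: "G \<in> forests n w (Suc k)" and i: "i \<in> Domain G"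
  shows "(G - {(i, parent G i)}, parent G i) \<in> attach_pairs n w k i"
proof -
  from G have sub: "G \<subseteq> arcs n w" and GF: "functional_forest G" and card: "card G = Suc k"
    unfolding forests_def by auto
  define m where "m = parent G i"
  have im: "(i, m) \<in> G"
    unfolding m_def using parent_in[OF functional_forest_single_valued[OF GF] i] .
  then have m: "m < n" "m \<noteq> i" "w i m > 0"
    using sub functional_forest_irrefl[OF GF] by (auto simp: arcs_def)
  have "card (G - {(i, m)}) = k" using card finite_if_subset_arcs[OF sub] im by simp
  then show ?thesis
    using functional_forest_Diff_arc[OF GF im] m sub
    unfolding attach_pairs_def forests_def m_def[symmetric] by auto
qed

lemma sum_attach_pairs_eq:
  assumes i: "i < n"
  shows "(\<Sum>(F, m)\<in>attach_pairs n w k i. laplacian_forest_term w i j F m)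
     = (\<Sum>G\<in>{G \<in> forests n w (Suc k). i \<in> Domain G}.
          sg_weight w G * (of_bool (i = j) - of_bool (tree_root G i = j)))"
proof -
  let ?A = "attach_pairs n w k i"
  let ?B = "{G \<in> forests n w (Suc k). i \<in> Domain G}"
  define attach :: "(nat \<times> nat) set \<times> nat \<Rightarrow> (nat \<times> nat) set"
    where "attach = (\<lambda>(F, m). insert (i, m) F)"
  define detach where "detach = (\<lambda>G. (G - {(i, parent G i)}, parent G i))"
  have "attach x \<in> ?B \<and> detach (attach x) = x \<and>
      sg_weight w (attach x) * (of_bool (i = j) - of_bool (tree_root (attach x) i = j))
        = (case x of (F, m) \<Rightarrow> laplacian_forest_term w i j F m)" if "x \<in> ?A" for x
  proof -
    obtain F m where x_eq: "x = (F, m)" by fastforce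
    from attach_pairs_insert_arc[OF that[unfolded x_eq] i] show ?thesis
      unfolding attach_def detach_def x_eq by auto
  qed
  moreover have "detach G \<in> ?A \<and> attach (detach G) = G" if "G \<in> ?B" for G
    using that forests_Diff_parent_arc[of G] parent_in[of G i] functional_forest_single_valued
    unfolding attach_def detach_def forests_def by auto
  ultimately show ?thesis
    by (intro sum.reindex_bij_witness[of ?A detach attach]) auto
qed

lemma sum_forests_not_root_eq:
  assumes "i < n"
  shows "(\<Sum>G\<in>{G \<in> forests n w k. i \<in> Domain G}.
          sg_weight w G * (of_bool (i = j) - of_bool (tree_root G i = j)))
       = of_bool (i = j) * forest_weight n w k - qk n w k i j"
proof -
  let ?t = "\<lambda>G. sg_weight w G * (of_bool (i = j) - of_bool (tree_root G i = j))"
  have "?t G = 0" if "G \<in> forests n w k" "i \<notin> Domain G" for G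
    using that by (simp add: forests_def tree_root_sink functional_forest_single_valued)
  then have "sum ?t {G \<in> forests n w k. i \<in> Domain G} = sum ?t (forests n w k)"
    by (intro sum.mono_neutral_left[OF finite_forests]) auto
  also have "\<dots> = of_bool (i = j) * forest_weight n w k - qk n w k i j"
    unfolding qk_eq_sum_forests[OF assms] forest_weight_def
    by (simp only: right_diff_distrib sum_subtractf sum_distrib_left mult.commute)
  finally show ?thesis .
qed

lemma qk_Suc:
  assumes nonneg: "\<And>m. m < n \<Longrightarrow> w i m \<ge> 0" and i: "i < n"
  shows "qk n w (Suc k) i j = of_bool (i = j) * forest_weight n w (Suc k)
           - (\<Sum>m\<in>{0..<n} - {i}. w i m * (qk n w k i j - qk n w k m j))"
  using laplacian_qk_eq_sum_forest_terms[OF i] sum_forest_terms_split[where n = n and w = w and i = i, OF nonneg]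
    sum_rehang_pairs_eq_0 sum_attach_pairs_eq[OF i] sum_forests_not_root_eq[OF i]
  by simp

lemma forests_0: "forests n w 0 = {{}}"
proof -
  have "functional_forest {}" unfolding functional_forest_def by simp
  moreover have "F = {}" if "F \<subseteq> arcs n w" "card F = 0" for F
    using that finite_if_subset_arcs by auto
  ultimately show ?thesis unfolding forests_def by auto
qed

lemma card_le_if_mem_forests: "F \<in> forests n w k \<Longrightarrow> card F \<le> n"
proof -
  assume F: "F \<in> forests n w k"
  then have "single_valued F" "F \<subseteq> arcs n w"
    using functional_forest_single_valued by (auto simp: forests_def)
  then have "inj_on fst F" "fst ` F \<subseteq> {0..<n}"
    unfolding single_valued_def inj_on_def arcs_def by auto
  then show "card F \<le> n" using card_inj_on_le[of fst F "{0..<n}"] by simp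
qed

lemma qk_0: "i < n \<Longrightarrow> qk n w 0 i j = of_bool (i = j)"
  by (simp add: qk_eq_sum_forests forests_0 sg_weight_def tree_root_sink)

lemma qk_eq_0_if_gt:
  assumes "i < n" "n < k"
  shows "qk n w k i j = 0"
proof -
  have "forests n w k = {}"
  proof (rule equals0I)
    fix F assume F: "F \<in> forests n w k"
    with card_le_if_mem_forests[OF F] assms(2) show False by (simp add: forests_def)
  qed
  then show ?thesis by (simp add: qk_eq_sum_forests[OF assms(1)])
qed

lemma forest_weight_0: "forest_weight n w 0 = 1"
  by (simp add: forest_weight_def forests_0 sg_weight_def)

section \<open>The matrix-forest identity and the eigenvectors\<close>

lemma laplacian_row_sum:
  assumes "i < n"
  shows "(\<Sum>m\<in>{0..<n}. laplacian n w $$ (i, m) * x m)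
       = (\<Sum>m\<in>{0..<n} - {i}. complex_of_real (w i m) * (x i - x m))"
proof -
  have "(\<Sum>m\<in>{0..<n}. laplacian n w $$ (i, m) * x m)
      = laplacian n w $$ (i, i) * x i + (\<Sum>m\<in>{0..<n} - {i}. laplacian n w $$ (i, m) * x m)"
    using assms by (simp add: sum.remove)
  also have "\<dots> = (\<Sum>m\<in>{0..<n} - {i}. complex_of_real (w i m)) * x i
      - (\<Sum>m\<in>{0..<n} - {i}. complex_of_real (w i m) * x m)"
    using assms by (simp add: laplacian_def sum_negf[symmetric])
  finally show ?thesis by (simp add: sum_distrib_right right_diff_distrib sum_subtractf)
qed

lemma laplacian_mult_Q_tau_entry:
  assumes nonneg: "\<And>m. m < n \<Longrightarrow> w i m \<ge> 0" and i: "i < n" and j: "j < n"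
  shows "(\<Sum>m\<in>{0..<n}. laplacian n w $$ (i, m) * Q_tau n w \<tau> $$ (m, j))
       = (\<Sum>k\<le>n. \<tau> ^ k * complex_of_real
            (of_bool (i = j) * forest_weight n w (Suc k) - qk n w (Suc k) i j))"
proof -
  define q where "q k m = complex_of_real (qk n w k m j)" for k m
  let ?V = "{0..<n} - {i}"
  have Q: "Q_tau n w \<tau> $$ (m, j) = (\<Sum>k\<le>n. q k m * \<tau> ^ k)" if "m < n" for m
    using that j by (simp add: Q_tau_def q_def)
  have "(\<Sum>m\<in>{0..<n}. laplacian n w $$ (i, m) * Q_tau n w \<tau> $$ (m, j))
      = (\<Sum>m\<in>?V. complex_of_real (w i m) * (Q_tau n w \<tau> $$ (i, j) - Q_tau n w \<tau> $$ (m, j)))"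
    using laplacian_row_sum[OF i] .
  also have "\<dots> = (\<Sum>m\<in>?V. \<Sum>k\<le>n. \<tau> ^ k * (complex_of_real (w i m) * (q k i - q k m)))"
    using i by (intro sum.cong refl) (simp add: Q sum_distrib_left sum_subtractf[symmetric] algebra_simps)
  also have "\<dots> = (\<Sum>k\<le>n. \<tau> ^ k * complex_of_real (\<Sum>m\<in>?V. w i m * (qk n w k i j - qk n w k m j)))"
    by (subst sum.swap) (simp add: sum_distrib_left q_def)
  also have "\<dots> = (\<Sum>k\<le>n. \<tau> ^ k * complex_of_real
            (of_bool (i = j) * forest_weight n w (Suc k) - qk n w (Suc k) i j))"
    using qk_Suc[where n = n and w = w and i = i and j = j, OF nonneg i] by simp
  finally show ?thesis .
qed

lemma Q_tau_resolvent_entry: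
  assumes nonneg: "\<And>m. m < n \<Longrightarrow> w i m \<ge> 0" and i: "i < n" and j: "j < n"
  shows "Q_tau n w \<tau> $$ (i, j) + \<tau> * (\<Sum>m\<in>{0..<n}. laplacian n w $$ (i, m) * Q_tau n w \<tau> $$ (m, j))
       = of_bool (i = j) * (\<Sum>k\<le>Suc n. complex_of_real (forest_weight n w k) * \<tau> ^ k)"
proof -
  define q where "q k = complex_of_real (qk n w k i j)" for k
  define \<sigma> where "\<sigma> k = complex_of_real (forest_weight n w k)" for k
  have "Q_tau n w \<tau> $$ (i, j) + \<tau> * (\<Sum>m\<in>{0..<n}. laplacian n w $$ (i, m) * Q_tau n w \<tau> $$ (m, j))
      = (\<Sum>k\<le>n. q k * \<tau> ^ k) + \<tau> * (\<Sum>k\<le>n. \<tau> ^ k * (of_bool (i = j) * \<sigma> (Suc k) - q (Suc k)))"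
    using laplacian_mult_Q_tau_entry[where w = w and i = i and \<tau> = \<tau>, OF nonneg i j] i j
    by (simp add: Q_tau_def q_def \<sigma>_def)
  also have "\<dots> = (\<Sum>k\<le>n. q k * \<tau> ^ k - q (Suc k) * \<tau> ^ Suc k)
        + of_bool (i = j) * (\<Sum>k\<le>n. \<sigma> (Suc k) * \<tau> ^ Suc k)"
    by (simp add: sum_distrib_left sum_subtractf sum.distrib algebra_simps)
  also have "\<dots> = of_bool (i = j) * (\<sigma> 0 + (\<Sum>k\<le>n. \<sigma> (Suc k) * \<tau> ^ Suc k))"
    using sum_telescope[of "\<lambda>k. q k * \<tau> ^ k" n] qk_0[OF i] qk_eq_0_if_gt[OF i, of "Suc n"]
      forest_weight_0
    unfolding q_def \<sigma>_def by (simp add: algebra_simps)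
  also have "\<dots> = of_bool (i = j) * (\<Sum>k\<le>Suc n. \<sigma> k * \<tau> ^ k)"
    unfolding sum.atMost_Suc_shift by simp
  finally show ?thesis unfolding \<sigma>_def .
qed

lemma Q_tau_resolvent:
  assumes nonneg: "\<And>i m. i < n \<Longrightarrow> m < n \<Longrightarrow> w i m \<ge> 0"
  shows "(1\<^sub>m n + \<tau> \<cdot>\<^sub>m laplacian n w) * Q_tau n w \<tau>
       = (\<Sum>k\<le>Suc n. complex_of_real (forest_weight n w k) * \<tau> ^ k) \<cdot>\<^sub>m 1\<^sub>m n"
    (is "?M * ?Q = ?s \<cdot>\<^sub>m _")
proof (rule eq_matI)
  fix i j assume "i < dim_row (?s \<cdot>\<^sub>m 1\<^sub>m n)" "j < dim_col (?s \<cdot>\<^sub>m 1\<^sub>m n)"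
  then have i: "i < n" and j: "j < n" by auto
  have L: "laplacian n w \<in> carrier_mat n n" and Q: "?Q \<in> carrier_mat n n"
    by (simp_all add: laplacian_def Q_tau_def)
  have "(?M * ?Q) $$ (i, j)
      = (\<Sum>m\<in>{0..<n}. (of_bool (i = m) + \<tau> * laplacian n w $$ (i, m)) * ?Q $$ (m, j))"
    using i j L Q by (auto simp: scalar_prod_def of_bool_def intro!: sum.cong)
  moreover have "{0..<n} \<inter> {m. i = m} = {i}" using i by auto
  ultimately have "(?M * ?Q) $$ (i, j) = ?Q $$ (i, j) + \<tau> * (\<Sum>m\<in>{0..<n}. laplacian n w $$ (i, m) * ?Q $$ (m, j))"
    by (simp add: distrib_right sum.distrib sum_distrib_left mult.assoc)
  also have "\<dots> = (?s \<cdot>\<^sub>m 1\<^sub>m n) $$ (i, j)"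
    using Q_tau_resolvent_entry[where w = w and i = i, OF nonneg[OF i] i j] i j by simp
  finally show "(?M * ?Q) $$ (i, j) = (?s \<cdot>\<^sub>m 1\<^sub>m n) $$ (i, j)" .
qed (simp_all add: Q_tau_def laplacian_def)

lemma eigenvector_col_if_resolvent_identity:
  fixes A Q :: "'a::field mat"
  assumes A: "A \<in> carrier_mat n n" and Q: "Q \<in> carrier_mat n n"
    and resolvent: "(1\<^sub>m n + \<tau> \<cdot>\<^sub>m A) * Q = s \<cdot>\<^sub>m 1\<^sub>m n"
    and e: "eigenvalue A e" and \<tau>e: "\<tau> * e = -1"
    and j: "j < n" and nonzero: "col Q j \<noteq> 0\<^sub>v n"
  shows "eigenvector A (col Q j) e"
proof -
  let ?C = "char_matrix A e"
  have C: "?C \<in> carrier_mat n n" using A by simp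
  have \<tau>e_mult: "\<tau> * (e * x) = - x" for x using \<tau>e by (simp add: mult.assoc[symmetric])
  have "?C = (- e) \<cdot>\<^sub>m (1\<^sub>m n + \<tau> \<cdot>\<^sub>m A)"
  proof (rule eq_matI)
    fix a b assume "a < dim_row ((- e) \<cdot>\<^sub>m (1\<^sub>m n + \<tau> \<cdot>\<^sub>m A))" "b < dim_col ((- e) \<cdot>\<^sub>m (1\<^sub>m n + \<tau> \<cdot>\<^sub>m A))"
    with A show "?C $$ (a, b) = ((- e) \<cdot>\<^sub>m (1\<^sub>m n + \<tau> \<cdot>\<^sub>m A)) $$ (a, b)"
      by (simp add: char_matrix_def algebra_simps) (simp add: \<tau>e_mult)
  qed (use A in \<open>auto simp: char_matrix_def\<close>)
  then have CQ: "?C * Q = (- e * s) \<cdot>\<^sub>m 1\<^sub>m n"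
    using resolvent mult_smult_assoc_mat[of "1\<^sub>m n + \<tau> \<cdot>\<^sub>m A" n n Q n] A Q
    by (auto intro!: eq_matI)
  have "(- e * s) ^ n = det (?C * Q)" unfolding CQ by simp
  also have "\<dots> = 0" using det_mult[OF C Q] e eigenvalue_det[OF A] by simp
  finally have zero: "- e * s = 0" using eigenvalue_imp_nonzero_dim[OF A e] by simp
  have "?C *\<^sub>v col Q j = col (?C * Q) j" using col_mult2[OF C Q j] by simp
  also have "\<dots> = col (0 \<cdot>\<^sub>m 1\<^sub>m n) j" unfolding CQ zero ..
  also have "\<dots> = 0\<^sub>v n" using j by (intro eq_vecI) auto
  finally have "?C *\<^sub>v col Q j = 0\<^sub>v n" .
  with Q j nonzero show ?thesis by (simp add: eigenvector_char_matrix[OF A])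
qed

theorem proposition13:
  fixes n :: nat and w :: "nat \<Rightarrow> nat \<Rightarrow> real" and lam :: complex and j :: nat
  assumes "n > 1"
    and "\<And>i k. i < n \<Longrightarrow> k < n \<Longrightarrow> w i k \<ge> 0"
    and "\<And>i. i < n \<Longrightarrow> w i i = 0"
    and "eigenvalue (laplacian n w) lam"
    and "lam \<noteq> 0"
    and "j < n"
    and "col (Q_tau n w (- inverse lam)) j \<noteq> 0\<^sub>v n"
  shows "eigenvector (laplacian n w) (col (Q_tau n w (- inverse lam)) j) lam"
proof (rule eigenvector_col_if_resolvent_identity[OF _ _ Q_tau_resolvent])
  show "laplacian n w \<in> carrier_mat n n" by (simp add: laplacian_def)
  show "Q_tau n w (- inverse lam) \<in> carrier_mat n n" by (simp add: Q_tau_def)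
  show "- inverse lam * lam = -1" using assms(5) by simp
qed (use assms in auto)

end
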